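(* Let $(X,d)$ be a compact metric space and $(X,f)$ a flow or semiflow that has the weak reparametrized gluing orbit property and is not minimal. Then there exist $x,y\in X$, $\epsilon>0$ and $T>0$ such that $d(f^t(x),x)\ge\epsilon$ for all $t\ge T$; $d(f^t(y),x)\ge\epsilon$ for all $t\ge T$; $d(f^t(y),y)\ge\epsilon$ for all $t\ge T$; and $d(f^t(x),y)\ge\epsilon$ for all $t\ge 0$.
   Context: A flow (resp. semiflow) on $X$ is a continuous family $\{f^t\}$ of continuous maps $X\to X$ indexed by $t\in\mathbb{R}$ (resp. $t\in[0,\infty)$) with $f^0=\mathrm{id}$ and $f^{t+s}=f^t\circ f^s$. $(X,f)$ is minimal if for every $x\in X$ the forward orbit $\{f^t(x):t\ge 0\}$ is dense in $X$. For $L\ge 1$, an $L$-reparametrization is a strictly increasing continuous function $\gamma:[0,\infty)\to[0,\infty)$ with $\gamma(0)=0$ and $L^{-1}\le \frac{\gamma(t_1)-\gamma(t_2)}{t_1-t_2}\le L$ for all $t_1\ne t_2$ in $[0,\infty)$. An orbit sequence of rank $k$ is a finite sequence $\mathscr{C}=\{(x_j,m_j)\in X\times[0,\infty):j=1,\dots,k\}$. A gap for it is a $(k-1)$-tuple $\mathscr{g}=\{t_j\in[0,\infty):j=1,\dots,k-1\}$. Given a reparametrization $\gamma$ and $\epsilon>0$, $(\mathscr{C},\mathscr{g},\gamma)$ is $\epsilon$-shadowed by $z\in X$ if for every $j=1,\dots,k$ and every $t\in[0,m_j]$ one has $d(f^{\gamma(s_j+t)}(z),f^t(x_j))<\epsilon$,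 where $s_1=0$ and $s_j=\sum_{i=1}^{j-1}(m_i+t_i)$ for $j\ge2$. $(X,f)$ has the weak reparametrized gluing orbit property if for every $\epsilon>0$ there is $M=M(\epsilon)>0$ such that for every orbit sequence $\mathscr{C}$ there exist a gap $\mathscr{g}$ with $\max\mathscr{g}\le M$ and an $M$-reparametrization $\gamma$ such that $(\mathscr{C},\mathscr{g},\gamma)$ is $\epsilon$-shadowed by some point of $X$. *)

theory Defs
  imports "HOL-Analysis.Analysis"
begin

definition is_semiflow :: "'a::metric_space set \<Rightarrow> (real \<Rightarrow> 'a \<Rightarrow> 'a) \<Rightarrow> bool" where
  "is_semiflow X f \<longleftrightarrow>
     continuous_on ({0..} \<times> X) (\<lambda>(t, x). f t x) \<and>
     (\<forall>t\<ge>0. \<forall>x\<in>X. f t x \<in> X) \<and>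
     (\<forall>x\<in>X. f 0 x = x) \<and>
     (\<forall>t\<ge>0. \<forall>s\<ge>0. \<forall>x\<in>X. f (t + s) x = f t (f s x))"

definition is_flow :: "'a::metric_space set \<Rightarrow> (real \<Rightarrow> 'a \<Rightarrow> 'a) \<Rightarrow> bool" where
  "is_flow X f \<longleftrightarrow>
     continuous_on (UNIV \<times> X) (\<lambda>(t, x). f t x) \<and>
     (\<forall>t. \<forall>x\<in>X. f t x \<in> X) \<and>
     (\<forall>x\<in>X. f 0 x = x) \<and>
     (\<forall>t s. \<forall>x\<in>X. f (t + s) x = f t (f s x))"

definition minimal :: "'a::metric_space set \<Rightarrow> (real \<Rightarrow> 'a \<Rightarrow> 'a) \<Rightarrow> bool" where
  "minimal X f \<longleftrightarrow> (\<forall>x\<in>X. X \<subseteq> closure {f t x | t. t \<ge> 0})"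

definition reparametrization :: "real \<Rightarrow> (real \<Rightarrow> real) \<Rightarrow> bool" where
  "reparametrization L \<gamma> \<longleftrightarrow>
     (\<forall>t\<ge>0. \<gamma> t \<ge> 0) \<and> \<gamma> 0 = 0 \<and>
     strict_mono_on {0..} \<gamma> \<and> continuous_on {0..} \<gamma> \<and>
     (\<forall>t1\<ge>0. \<forall>t2\<ge>0. t1 \<noteq> t2 \<longrightarrow>
        inverse L \<le> (\<gamma> t1 - \<gamma> t2) / (t1 - t2) \<and> (\<gamma> t1 - \<gamma> t2) / (t1 - t2) \<le> L)"

text \<open>Orbit sequence of rank k: points xs j and times ms j for j < k (0-indexed).
  Gap: ts j for j < k - 1. Shadowing by z with reparametrization \<gamma>.\<close>
definition shadows ::
  "'a::metric_space set \<Rightarrow> (real \<Rightarrow> 'a \<Rightarrow> 'a) \<Rightarrow> real \<Rightarrow> nat \<Rightarrow> (nat \<Rightarrow> 'a) \<Rightarrow> (nat \<Rightarrow> real)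
     \<Rightarrow> (nat \<Rightarrow> real) \<Rightarrow> (real \<Rightarrow> real) \<Rightarrow> 'a \<Rightarrow> bool" where
  "shadows X f \<epsilon> k xs ms ts \<gamma> z \<longleftrightarrow>
     (\<forall>j<k. \<forall>t\<in>{0..ms j}.
        dist (f (\<gamma> ((\<Sum>i<j. ms i + ts i) + t)) z) (f t (xs j)) < \<epsilon>)"

definition weak_reparam_gluing :: "'a::metric_space set \<Rightarrow> (real \<Rightarrow> 'a \<Rightarrow> 'a) \<Rightarrow> bool" where
  "weak_reparam_gluing X f \<longleftrightarrow>
     (\<forall>\<epsilon>>0. \<exists>M>0. \<forall>k::nat. \<forall>xs ms.
        k \<ge> 1 \<and> (\<forall>j<k. xs j \<in> X \<and> ms j \<ge> 0) \<longrightarrow>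
        (\<exists>ts \<gamma> z. (\<forall>j<k - 1. 0 \<le> ts j \<and> ts j \<le> M) \<and> reparametrization M \<gamma> \<and>
           z \<in> X \<and> shadows X f \<epsilon> k xs ms ts \<gamma> z))"

end

theory Submission
  imports Defs
begin

text \<open>Since X is not minimal, some point p lies at positive distance 4\<epsilon> from the forward orbit
  A of some x0. Gluing the orbit segment of length 0 at p to longer and longer orbit segments of
  x0, and passing to a limit point by compactness, yields y with d(y, p) \<le> \<epsilon> whose orbit stays
  \<epsilon>-close to A from some time C on. Then y is far from A but its orbit eventually is not, so y
  is not periodic, and x = f s y for a small s > 0 still lies far from A. Triangle inequalities
  for the distance to A give the separations for t \<ge> C, and the compact orbit segment of x
  over [0, C], which misses y, gives the separation of f t x from y for t \<le> C.\<close>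

definition forward_orbit :: "(real \<Rightarrow> 'a \<Rightarrow> 'a) \<Rightarrow> 'a \<Rightarrow> 'a set" where
  "forward_orbit f x = {f t x | t. t \<ge> 0}"

lemma forward_orbit_nonempty: "forward_orbit f x \<noteq> {}"
  by (auto simp: forward_orbit_def)

lemma infdist_gap_le_dist:
  assumes "infdist a A \<le> \<epsilon>" "2 * \<epsilon> \<le> infdist b A" "\<delta> \<le> \<epsilon>"
  shows "\<delta> \<le> dist a b"
  using assms infdist_triangle_abs[of a A b] by linarith

lemma is_flow_imp_is_semiflow: "is_flow X f \<Longrightarrow> is_semiflow X f"
  unfolding is_flow_def is_semiflow_def by (auto intro: continuous_on_subset)

context
  fixes X :: "'a::metric_space set" and f :: "real \<Rightarrow> 'a \<Rightarrow> 'a"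
  assumes semiflow: "is_semiflow X f"
begin

lemma semiflow_in_space: "t \<ge> 0 \<Longrightarrow> x \<in> X \<Longrightarrow> f t x \<in> X"
  and semiflow_zero: "x \<in> X \<Longrightarrow> f 0 x = x"
  and semiflow_add: "t \<ge> 0 \<Longrightarrow> s \<ge> 0 \<Longrightarrow> x \<in> X \<Longrightarrow> f (t + s) x = f t (f s x)"
  using semiflow unfolding is_semiflow_def by auto

lemma semiflow_continuous_on_space:
  assumes "t \<ge> 0"
  shows "continuous_on X (f t)"
proof -
  have "continuous_on ({0..} \<times> X) (\<lambda>(t, x). f t x)"
    using semiflow unfolding is_semiflow_def by auto
  then have "continuous_on X ((\<lambda>(t, x). f t x) \<circ> (\<lambda>x. (t, x)))"
    by (intro continuous_on_compose) (auto intro!: continuous_intros elim: continuous_on_subset simp: assms)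
  then show ?thesis by (simp add: o_def)
qed

lemma semiflow_continuous_on_time:
  assumes "x \<in> X"
  shows "continuous_on {0..} (\<lambda>t. f t x)"
proof -
  have "continuous_on ({0..} \<times> X) (\<lambda>(t, x). f t x)"
    using semiflow unfolding is_semiflow_def by auto
  then have "continuous_on {0..} ((\<lambda>(t, x). f t x) \<circ> (\<lambda>t. (t, x)))"
    by (intro continuous_on_compose) (auto intro!: continuous_intros elim: continuous_on_subset simp: assms)
  then show ?thesis by (simp add: o_def)
qed

lemma semiflow_small_time_close:
  assumes "x \<in> X" "\<epsilon> > 0"
  obtains s where "s > 0" "dist (f s x) x < \<epsilon>"
proof -
  obtain d where "d > 0" and d: "\<forall>t\<in>{0..}. dist t 0 < d \<longrightarrow> dist (f t x) (f 0 x) < \<epsilon>"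
    using semiflow_continuous_on_time[OF assms(1)] assms(2) unfolding continuous_on_iff
    by (meson atLeast_iff order_refl)
  then have "dist (f (d/2) x) x < \<epsilon>"
    using semiflow_zero[OF assms(1)] by auto
  with \<open>d > 0\<close> show ?thesis by (intro that) auto
qed

lemma semiflow_periodic_multiple:
  assumes "x \<in> X" "\<tau> \<ge> 0" "f \<tau> x = x"
  shows "f (real n * \<tau>) x = x"
proof (induction n)
  case 0
  show ?case using semiflow_zero[OF assms(1)] by simp
next
  case (Suc n)
  have "f (real (Suc n) * \<tau>) x = f (real n * \<tau> + \<tau>) x"
    by (simp add: algebra_simps)
  also have "\<dots> = f (real n * \<tau>) x"
    using semiflow_add[of "real n * \<tau>" \<tau> x] assms by simp
  finally show ?case using Suc by simp
qed

lemma semiflow_periodic_point_eventually: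
  assumes "x \<in> X" "\<tau> > 0" "f \<tau> x = x" "\<forall>t\<ge>C. P (f t x)"
  shows "P x"
proof -
  obtain n :: nat where "C / \<tau> \<le> real n"
    using real_arch_simple by blast
  then have "C \<le> real n * \<tau>"
    using assms(2) by (simp add: divide_le_eq)
  then have "P (f (real n * \<tau>) x)"
    using assms(4) by blast
  then show ?thesis
    using semiflow_periodic_multiple[OF assms(1) _ assms(3)] assms(2) by simp
qed

lemma semiflow_orbit_segment_separated:
  assumes "x \<in> X" "\<forall>t\<in>{0..C}. f t x \<noteq> z" "C \<ge> 0"
  obtains r where "r > 0" "\<forall>t\<in>{0..C}. r \<le> dist (f t x) z"
proof -
  define K where "K = (\<lambda>t. f t x) ` {0..C}"
  have "compact K"
    unfolding K_def using semiflow_continuous_on_time[OF assms(1)]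
    by (intro compact_continuous_image) (auto elim: continuous_on_subset)
  moreover have "K \<noteq> {}" "z \<notin> K"
    using assms(2,3) unfolding K_def by auto
  ultimately have "infdist z K > 0"
    by (intro infdist_pos_not_in_closed compact_imp_closed)
  moreover have "\<forall>t\<in>{0..C}. infdist z K \<le> dist (f t x) z"
    unfolding K_def by (auto intro: infdist_le simp: dist_commute)
  ultimately show ?thesis using that by blast
qed

end

lemma reparametrization_bounds:
  assumes "reparametrization L \<gamma>" "t \<ge> 0"
  shows "t / L \<le> \<gamma> t \<and> \<gamma> t \<le> L * t"
proof (cases "t = 0")
  case True
  then show ?thesis using assms(1) unfolding reparametrization_def by simp
next
  case False
  then have "t > 0" using assms(2) by simp
  have "\<gamma> 0 = 0" and slope: "\<forall>t1\<ge>0. \<forall>t2\<ge>0. t1 \<noteq> t2 \<longrightarrow>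
      inverse L \<le> (\<gamma> t1 - \<gamma> t2) / (t1 - t2) \<and> (\<gamma> t1 - \<gamma> t2) / (t1 - t2) \<le> L"
    using assms(1) unfolding reparametrization_def by simp_all
  then have "inverse L \<le> \<gamma> t / t \<and> \<gamma> t / t \<le> L"
    using slope[rule_format, of t 0] \<open>t > 0\<close> by simp
  then show ?thesis
    using \<open>t > 0\<close> pos_le_divide_eq[of t "inverse L" "\<gamma> t"] pos_divide_le_eq[of t "\<gamma> t" L]
    by (simp add: divide_inverse_commute)
qed

lemma shadowing_window_near_orbit:
  assumes "reparametrization M \<gamma>" "M > 0" "0 \<le> \<tau>" "\<tau> \<le> M"
    and shadow: "\<forall>t\<in>{0..m}. dist (f (\<gamma> (\<tau> + t)) z) (f t x0) < \<epsilon>"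
    and u: "M * M \<le> u" "u * M \<le> m"
  shows "infdist (f u z) (forward_orbit f x0) < \<epsilon>"
proof -
  have "m \<ge> 0"
    using u assms(2) by (smt (verit) mult_pos_pos)
  have "\<gamma> \<tau> \<le> u"
    using reparametrization_bounds[OF assms(1,3)] assms(2,4) u(1)
    by (smt (verit) mult_left_mono)
  moreover have "u \<le> \<gamma> (\<tau> + m)"
  proof -
    have "u \<le> m / M" using u(2) assms(2) by (simp add: le_divide_eq)
    also have "\<dots> \<le> (\<tau> + m) / M" using assms(2,3) by (simp add: divide_right_mono)
    also have "\<dots> \<le> \<gamma> (\<tau> + m)"
      using reparametrization_bounds[OF assms(1), of "\<tau> + m"] assms(3) \<open>m \<ge> 0\<close> by simp
    finally show ?thesis .
  qed
  moreover have "continuous_on {\<tau>..\<tau> + m} \<gamma>"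
    using assms(1,3) unfolding reparametrization_def by (auto elim: continuous_on_subset)
  ultimately obtain t' where t': "\<tau> \<le> t'" "t' \<le> \<tau> + m" "\<gamma> t' = u"
    using IVT'[of \<gamma> \<tau> u "\<tau> + m"] \<open>m \<ge> 0\<close> by auto
  then have "dist (f u z) (f (t' - \<tau>) x0) < \<epsilon>"
    using shadow[rule_format, of "t' - \<tau>"] by simp
  moreover have "f (t' - \<tau>) x0 \<in> forward_orbit f x0"
    using t' unfolding forward_orbit_def by auto
  ultimately show ?thesis
    by (meson infdist_le le_less_trans)
qed

lemma weak_reparam_gluing_near_orbit_windows:
  assumes "is_semiflow X f" "weak_reparam_gluing X f" "p \<in> X" "x0 \<in> X" "\<epsilon> > 0"
  obtains M where "M > 0"
    "\<And>m. m \<ge> 0 \<Longrightarrow> \<exists>z\<in>X. dist z p < \<epsilon> \<and>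
       (\<forall>u. M * M \<le> u \<and> u * M \<le> m \<longrightarrow> infdist (f u z) (forward_orbit f x0) < \<epsilon>)"
proof -
  obtain M where "M > 0" and gluing: "\<forall>k::nat. \<forall>xs ms.
        k \<ge> 1 \<and> (\<forall>j<k. xs j \<in> X \<and> ms j \<ge> 0) \<longrightarrow>
        (\<exists>ts \<gamma> z. (\<forall>j<k - 1. 0 \<le> ts j \<and> ts j \<le> M) \<and> reparametrization M \<gamma> \<and>
           z \<in> X \<and> shadows X f \<epsilon> k xs ms ts \<gamma> z)"
    using assms(2,5) unfolding weak_reparam_gluing_def by blast
  have "\<exists>z\<in>X. dist z p < \<epsilon> \<and>
      (\<forall>u. M * M \<le> u \<and> u * M \<le> m \<longrightarrow> infdist (f u z) (forward_orbit f x0) < \<epsilon>)"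
    if "m \<ge> 0" for m
  proof -
    define xs where "xs = (\<lambda>j::nat. if j = 0 then p else x0)"
    define ms where "ms = (\<lambda>j::nat. if j = 0 then 0 else m)"
    have "(2::nat) \<ge> 1 \<and> (\<forall>j<2. xs j \<in> X \<and> ms j \<ge> 0)"
      using assms(3,4) \<open>m \<ge> 0\<close> by (simp add: xs_def ms_def)
    then obtain ts \<gamma> z where ts: "\<forall>j<2 - 1. 0 \<le> ts j \<and> ts j \<le> M"
      and \<gamma>: "reparametrization M \<gamma>" and "z \<in> X" and shadow: "shadows X f \<epsilon> 2 xs ms ts \<gamma> z"
      using gluing by blast
    have "\<gamma> 0 = 0" using \<gamma> unfolding reparametrization_def by simp
    then have "dist z p < \<epsilon>"
      using shadow semiflow_zero[OF assms(1)] \<open>z \<in> X\<close> assms(3)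
      unfolding shadows_def by (force simp: xs_def ms_def)
    moreover have "\<forall>t\<in>{0..m}. dist (f (\<gamma> (ts 0 + t)) z) (f t x0) < \<epsilon>"
      using shadow unfolding shadows_def by (auto simp: xs_def ms_def elim!: allE[of _ 1])
    moreover have "0 \<le> ts 0" "ts 0 \<le> M" using ts by auto
    ultimately show ?thesis
      using \<open>z \<in> X\<close> shadowing_window_near_orbit[OF \<gamma> \<open>M > 0\<close>] by blast
  qed
  with \<open>M > 0\<close> show ?thesis using that by blast
qed

lemma weak_reparam_gluing_eventually_near_orbit:
  assumes "compact X" "is_semiflow X f" "weak_reparam_gluing X f" "p \<in> X" "x0 \<in> X" "\<epsilon> > 0"
  obtains C y where "C > 0" "y \<in> X" "dist y p \<le> \<epsilon>"
    "\<forall>t\<ge>C. infdist (f t y) (forward_orbit f x0) \<le> \<epsilon>"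
proof -
  define A where "A = forward_orbit f x0"
  obtain M where "M > 0" and windows: "\<And>m. m \<ge> 0 \<Longrightarrow> \<exists>z\<in>X. dist z p < \<epsilon> \<and>
       (\<forall>u. M * M \<le> u \<and> u * M \<le> m \<longrightarrow> infdist (f u z) A < \<epsilon>)"
    using weak_reparam_gluing_near_orbit_windows[OF assms(2-6)] unfolding A_def by blast
  obtain zs where zs: "\<And>n. zs n \<in> X" "\<And>n. dist (zs n) p < \<epsilon>"
    "\<And>n u. M * M \<le> u \<Longrightarrow> u * M \<le> real n \<Longrightarrow> infdist (f u (zs n)) A < \<epsilon>"
    using windows[OF of_nat_0_le_iff] by metis
  obtain y r where "y \<in> X" "strict_mono (r :: nat \<Rightarrow> nat)" and lim: "(zs \<circ> r) \<longlonglongrightarrow> y"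
    using compact_imp_seq_compact[OF assms(1)] zs(1) by (metis seq_compactE)
  have "dist y p \<le> \<epsilon>"
    using zs(2) by (intro LIMSEQ_le_const2[OF tendsto_dist[OF lim tendsto_const]]) (auto intro: less_imp_le)
  moreover have "infdist (f u y) A \<le> \<epsilon>" if u: "M * M \<le> u" for u
  proof -
    have "u \<ge> 0" using u zero_le_square[of M] by linarith
    then have "(\<lambda>n. infdist (f u ((zs \<circ> r) n)) A) \<longlonglongrightarrow> infdist (f u y) A"
      using zs(1) \<open>y \<in> X\<close>
      by (intro tendsto_infdist continuous_on_tendsto_compose[OF semiflow_continuous_on_space[OF assms(2)] lim]) auto
    moreover obtain N :: nat where N: "u * M \<le> real N"
      using real_arch_simple by blast
    have "infdist (f u ((zs \<circ> r) n)) A \<le> \<epsilon>" if "n \<ge> N" for n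
      using seq_suble[OF \<open>strict_mono r\<close>, of n] that N zs(3)[OF u, of "r n"] by simp
    ultimately show ?thesis
      by (blast intro: LIMSEQ_le_const2)
  qed
  ultimately show ?thesis
    using that[of "M * M" y] \<open>M > 0\<close> \<open>y \<in> X\<close> unfolding A_def by auto
qed

lemma semiflow_separated_pair:
  assumes sf: "is_semiflow X f" and "y \<in> X" "\<epsilon> > 0" "C > 0"
    and far: "3 * \<epsilon> \<le> infdist y A" and near: "\<forall>t\<ge>C. infdist (f t y) A \<le> \<epsilon>"
  shows "\<exists>x\<in>X. \<exists>\<delta>>0.
           (\<forall>t\<ge>C. dist (f t x) x \<ge> \<delta>) \<and>
           (\<forall>t\<ge>C. dist (f t y) x \<ge> \<delta>) \<and>
           (\<forall>t\<ge>C. dist (f t y) y \<ge> \<delta>) \<and>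
           (\<forall>t\<ge>0. dist (f t x) y \<ge> \<delta>)"
proof -
  obtain s where "s > 0" and "dist (f s y) y < \<epsilon>"
    using semiflow_small_time_close[OF sf \<open>y \<in> X\<close> \<open>\<epsilon> > 0\<close>] by blast
  define x where "x = f s y"
  have "x \<in> X" using semiflow_in_space[OF sf] \<open>s > 0\<close> \<open>y \<in> X\<close> by (simp add: x_def)
  have x_far: "2 * \<epsilon> \<le> infdist x A"
    using far infdist_triangle[of y A x] \<open>dist (f s y) y < \<epsilon>\<close> by (simp add: x_def dist_commute)
  have x_shift: "f t x = f (t + s) y" if "t \<ge> 0" for t
    using semiflow_add[OF sf that _ \<open>y \<in> X\<close>, of s] \<open>s > 0\<close> by (simp add: x_def)
  have x_near: "infdist (f t x) A \<le> \<epsilon>" if "t \<ge> C" for t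
    using near[rule_format, of "t + s"] x_shift[of t] that \<open>C > 0\<close> \<open>s > 0\<close> by simp
  have "f \<tau> y \<noteq> y" if "\<tau> > 0" for \<tau>
  proof
    assume "f \<tau> y = y"
    then have "infdist y A \<le> \<epsilon>"
      using semiflow_periodic_point_eventually[OF sf \<open>y \<in> X\<close> that, of C "\<lambda>z. infdist z A \<le> \<epsilon>"] near
      by blast
    with far \<open>\<epsilon> > 0\<close> show False by linarith
  qed
  then have "\<forall>t\<in>{0..C}. f t x \<noteq> y"
    using x_shift \<open>s > 0\<close> by auto
  then obtain r where "r > 0" and r: "\<forall>t\<in>{0..C}. r \<le> dist (f t x) y"
    using semiflow_orbit_segment_separated[OF sf \<open>x \<in> X\<close> _ less_imp_le[OF \<open>C > 0\<close>]] by blast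
  define \<delta> where "\<delta> = min \<epsilon> r"
  have "\<delta> > 0" "\<delta> \<le> \<epsilon>" "\<delta> \<le> r"
    using \<open>\<epsilon> > 0\<close> \<open>r > 0\<close> by (simp_all add: \<delta>_def)
  have y_far: "2 * \<epsilon> \<le> infdist y A"
    using far \<open>\<epsilon> > 0\<close> by linarith
  have "dist (f t x) y \<ge> \<delta>" if "t \<ge> 0" for t
  proof (cases "t \<le> C")
    case True
    then show ?thesis using r \<open>t \<ge> 0\<close> \<open>\<delta> \<le> r\<close> by (meson atLeastAtMost_iff order_trans)
  next
    case False
    then show ?thesis using infdist_gap_le_dist[OF x_near y_far \<open>\<delta> \<le> \<epsilon>\<close>] by simp
  qed
  moreover have "dist (f t x) x \<ge> \<delta>" "dist (f t y) x \<ge> \<delta>" "dist (f t y) y \<ge> \<delta>" if "t \<ge> C" for t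
    using infdist_gap_le_dist[OF x_near[OF that] x_far \<open>\<delta> \<le> \<epsilon>\<close>]
      infdist_gap_le_dist[OF near[rule_format, OF that] _ \<open>\<delta> \<le> \<epsilon>\<close>] x_far y_far
    by simp_all
  ultimately show ?thesis
    using \<open>x \<in> X\<close> \<open>\<delta> > 0\<close> by blast
qed

theorem lemma3p2:
  fixes X :: "'a::metric_space set" and f :: "real \<Rightarrow> 'a \<Rightarrow> 'a"
  assumes "compact X"
    and "is_flow X f \<or> is_semiflow X f"
    and "weak_reparam_gluing X f"
    and "\<not> minimal X f"
  shows "\<exists>x\<in>X. \<exists>y\<in>X. \<exists>\<epsilon>>0. \<exists>T>0.
           (\<forall>t\<ge>T. dist (f t x) x \<ge> \<epsilon>) \<and>
           (\<forall>t\<ge>T. dist (f t y) x \<ge> \<epsilon>) \<and>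
           (\<forall>t\<ge>T. dist (f t y) y \<ge> \<epsilon>) \<and>
           (\<forall>t\<ge>0. dist (f t x) y \<ge> \<epsilon>)"
proof -
  have sf: "is_semiflow X f"
    using assms(2) is_flow_imp_is_semiflow by blast
  obtain x0 p where "x0 \<in> X" "p \<in> X" and "p \<notin> closure (forward_orbit f x0)"
    using assms(4) unfolding minimal_def forward_orbit_def by blast
  define A where "A = forward_orbit f x0"
  define \<epsilon> where "\<epsilon> = infdist p A / 4"
  have "infdist p A \<noteq> 0"
    using \<open>p \<notin> closure (forward_orbit f x0)\<close> in_closure_iff_infdist_zero[OF forward_orbit_nonempty]
    unfolding A_def by blast
  then have "\<epsilon> > 0"
    using infdist_nonneg[of p A] by (simp add: \<epsilon>_def)
  obtain C y where "C > 0" "y \<in> X" "dist y p \<le> \<epsilon>" and near: "\<forall>t\<ge>C. infdist (f t y) A \<le> \<epsilon>"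
    using weak_reparam_gluing_eventually_near_orbit[OF assms(1) sf assms(3) \<open>p \<in> X\<close> \<open>x0 \<in> X\<close> \<open>\<epsilon> > 0\<close>]
    unfolding A_def by blast
  have "3 * \<epsilon> \<le> infdist y A"
    using infdist_triangle[of p A y] \<open>dist y p \<le> \<epsilon>\<close> by (simp add: \<epsilon>_def dist_commute)
  then show ?thesis
    using semiflow_separated_pair[OF sf \<open>y \<in> X\<close> \<open>\<epsilon> > 0\<close> \<open>C > 0\<close> _ near] \<open>C > 0\<close> \<open>y \<in> X\<close> by blast
qed

end
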